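(* Let $f:\mathbb{R}^n\to\overline{\mathbb{R}}$ be a proper closed convex function with conjugate $f^*$, and let $K=\{(x,r)\in\mathbb{R}^n\times\mathbb{R} : x=0,\ r\ge 0\}$. A subset $F\subseteq\operatorname{epi} f$ is a $K$-minimal exposed face of $\operatorname{epi} f$ if and only if there is some $\bar u\in\operatorname{dom} f^*$ with $\partial f^*(\bar u)\neq\emptyset$ such that $$F=\{(x,f(x))\in\mathbb{R}^n\times\mathbb{R} : \bar u\in\partial f(x)\}.$$ Moreover, a subset $F^*\subseteq\operatorname{epi} f^*$ is a $K$-minimal exposed face of $\operatorname{epi} f^*$ if and only if there is some $\bar x\in\operatorname{dom} f$ with $\partial f(\bar x)\neq\emptyset$ such that $$F^*=\{(u,f^*(u))\in\mathbb{R}^n\times\mathbb{R} : u\in\partial f(\bar x)\}.$$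
   Context: $\overline{\mathbb{R}}=\mathbb{R}\cup\{\pm\infty\}$; $f^*(u)=\sup_x(\langle x,u\rangle-f(x))$. An exposed face of a convex set $A\subseteq\mathbb{R}^{n+1}$ is a set of the form $A\cap H$ where $H$ is a supporting hyperplane to $A$ (i.e. $A\cap H\neq\emptyset$ and $A$ lies in one closed half-space bounded by $H$). A point $p\in A$ is minimal with respect to $K$ if $(\{p\}-K\setminus(-K))\cap A=\emptyset$; a face is $K$-minimal if all its points are minimal with respect to $K$. *)

theory Defs
  imports "HOL-Analysis.Analysis"
begin

text \<open>Extended-real-valued functions on a Euclidean space 'a (playing the role of R^n).
  Points of R^n x R are pairs of type 'a \<times> real.\<close>

definition epi :: "('a \<Rightarrow> ereal) \<Rightarrow> ('a \<times> real) set" where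
  "epi f = {(x, r). f x \<le> ereal r}"

definition edom :: "('a \<Rightarrow> ereal) \<Rightarrow> 'a set" where
  "edom f = {x. f x < \<infinity>}"

definition proper_fun :: "('a \<Rightarrow> ereal) \<Rightarrow> bool" where
  "proper_fun f \<longleftrightarrow> (\<forall>x. f x \<noteq> -\<infinity>) \<and> (\<exists>x. f x < \<infinity>)"

definition convex_fun :: "('a::real_vector \<Rightarrow> ereal) \<Rightarrow> bool" where
  "convex_fun f \<longleftrightarrow> convex (epi f)"

definition closed_fun :: "('a::topological_space \<Rightarrow> ereal) \<Rightarrow> bool" where
  "closed_fun f \<longleftrightarrow> closed (epi f)"

definition conj_fun :: "('a::real_inner \<Rightarrow> ereal) \<Rightarrow> 'a \<Rightarrow> ereal" where
  "conj_fun f u = (SUP x. ereal (x \<bullet> u) - f x)"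

definition subdiff :: "('a::real_inner \<Rightarrow> ereal) \<Rightarrow> 'a \<Rightarrow> 'a set" where
  "subdiff f x = {u. \<bar>f x\<bar> \<noteq> \<infinity> \<and> (\<forall>y. f x + ereal ((y - x) \<bullet> u) \<le> f y)}"

definition exposed_face :: "'b::real_inner set \<Rightarrow> 'b set \<Rightarrow> bool" where
  "exposed_face F A \<longleftrightarrow> (\<exists>a b. a \<noteq> 0 \<and> A \<inter> {p. a \<bullet> p = b} \<noteq> {} \<and>
       A \<subseteq> {p. a \<bullet> p \<le> b} \<and> F = A \<inter> {p. a \<bullet> p = b})"

definition minimal_wrt :: "'b::ab_group_add set \<Rightarrow> 'b set \<Rightarrow> 'b \<Rightarrow> bool" where
  "minimal_wrt K A p \<longleftrightarrow> ((\<lambda>k. p - k) ` (K - uminus ` K)) \<inter> A = {}"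

definition minimal_face :: "'b::ab_group_add set \<Rightarrow> 'b set \<Rightarrow> 'b set \<Rightarrow> bool" where
  "minimal_face K A F \<longleftrightarrow> (\<forall>p\<in>F. minimal_wrt K A p)"

definition Kvert :: "('a::real_vector \<times> real) set" where
  "Kvert = {(x, r). x = 0 \<and> r \<ge> 0}"

end

theory Submission
  imports Defs
begin

text \<open>A minimal exposed face of an epigraph cannot lie in a vertical hyperplane, since it would
  then contain a point strictly above another point of the epigraph; so its normal can be scaled
  to \<open>(u, -1)\<close>. Such a hyperplane supports \<open>epi g\<close> at level \<open>b\<close> exactly when \<open>b = g\<^sup>*(u)\<close>, and
  by the Fenchel--Young equality it then meets \<open>epi g\<close> in the graph of \<open>g\<close> over the points
  \<open>x\<close> with \<open>u \<in> \<partial>g(x)\<close>. For the conjugate one needs \<open>x \<in> \<partial>f\<^sup>*(u) \<longleftrightarrow> u \<in> \<partial>f(x)\<close> for closed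
  proper convex \<open>f\<close>, whose nontrivial direction rests on \<open>f \<le> f\<^sup>*\<^sup>*\<close>: a point below \<open>epi f\<close> is
  strictly separated from it, and a vertical separator is tilted using a point of \<open>dom f\<^sup>*\<close>.\<close>

lemma conj_fun_ge: "ereal (x \<bullet> u) - f x \<le> conj_fun f u"
  unfolding conj_fun_def by (rule SUP_upper) auto

lemma conj_fun_le: "(\<And>x. ereal (x \<bullet> u) - f x \<le> c) \<Longrightarrow> conj_fun f u \<le> c"
  unfolding conj_fun_def by (rule SUP_least) auto

lemma conj_fun_neq_minf:
  assumes "proper_fun f"
  shows "conj_fun f u \<noteq> -\<infinity>"
proof -
  obtain x where "f x < \<infinity>" "f x \<noteq> -\<infinity>"
    using assms unfolding proper_fun_def by auto
  then obtain r where "f x = ereal r" by (cases "f x") auto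
  then have "ereal (x \<bullet> u - r) \<le> conj_fun f u"
    using conj_fun_ge[of x u f] by simp
  then show ?thesis by auto
qed

lemma subdiff_iff_conj_fun:
  "u \<in> subdiff f x \<longleftrightarrow>
     \<bar>f x\<bar> \<noteq> \<infinity> \<and> conj_fun f u = ereal (x \<bullet> u - real_of_ereal (f x))"
proof
  assume u: "u \<in> subdiff f x"
  then obtain r where r: "f x = ereal r"
    unfolding subdiff_def by (cases "f x") auto
  have "conj_fun f u \<le> ereal (x \<bullet> u - r)"
  proof (rule conj_fun_le)
    fix y
    have "f x + ereal ((y - x) \<bullet> u) \<le> f y" using u unfolding subdiff_def by auto
    then show "ereal (y \<bullet> u) - f y \<le> ereal (x \<bullet> u - r)"
      using r by (cases "f y") (auto simp: inner_diff_left)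
  qed
  moreover have "ereal (x \<bullet> u - r) \<le> conj_fun f u"
    using conj_fun_ge[of x u f] r by simp
  ultimately show "\<bar>f x\<bar> \<noteq> \<infinity> \<and> conj_fun f u = ereal (x \<bullet> u - real_of_ereal (f x))"
    using r by simp
next
  assume h: "\<bar>f x\<bar> \<noteq> \<infinity> \<and> conj_fun f u = ereal (x \<bullet> u - real_of_ereal (f x))"
  then obtain r where r: "f x = ereal r" by (cases "f x") auto
  have "f x + ereal ((y - x) \<bullet> u) \<le> f y" for y
    using conj_fun_ge[of y u f] h r by (cases "f y") (auto simp: inner_diff_left)
  with h show "u \<in> subdiff f x" unfolding subdiff_def by auto
qed

lemma mem_Kvert_strict: "(a, s) \<in> Kvert - uminus ` Kvert \<longleftrightarrow> a = 0 \<and> 0 < s"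
proof -
  have "(a, s) \<in> uminus ` Kvert \<longleftrightarrow> (- a, - s) \<in> Kvert"
    by (metis (no_types, lifting) image_iff minus_minus uminus_Pair)
  then show ?thesis unfolding Kvert_def by auto
qed

lemma minimal_wrt_Kvert_iff:
  fixes y :: "'a::real_vector"
  shows "minimal_wrt Kvert A (y, r) \<longleftrightarrow> (\<forall>s>0. (y, r - s) \<notin> A)"
proof -
  have "minimal_wrt Kvert A (y, r) \<longleftrightarrow> (\<forall>k \<in> Kvert - uminus ` Kvert. (y, r) - k \<notin> A)"
    unfolding minimal_wrt_def by blast
  also have "\<dots> \<longleftrightarrow> (\<forall>s>0. (y, r - s) \<notin> A)"
  proof
    assume H: "\<forall>k \<in> Kvert - uminus ` Kvert. (y, r) - k \<notin> A"
    show "\<forall>s>0. (y, r - s) \<notin> A"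
    proof (intro allI impI)
      fix s :: real assume "0 < s"
      then have "(0, s) \<in> Kvert - uminus ` Kvert" by (simp only: mem_Kvert_strict)
      with H have "(y, r) - (0, s) \<notin> A" by blast
      then show "(y, r - s) \<notin> A" by simp
    qed
  next
    assume H: "\<forall>s>0. (y, r - s) \<notin> A"
    show "\<forall>k \<in> Kvert - uminus ` Kvert. (y, r) - k \<notin> A"
    proof
      fix k :: "'a \<times> real" assume k: "k \<in> Kvert - uminus ` Kvert"
      obtain a s where ks: "k = (a, s)" by (cases k)
      have "a = 0 \<and> 0 < s" using k unfolding ks mem_Kvert_strict .
      with H show "(y, r) - k \<notin> A" unfolding ks by simp
    qed
  qed
  finally show ?thesis .
qed

lemma minimal_wrt_Kvert_epi_iff:
  assumes "g y \<noteq> -\<infinity>" and "g y \<le> ereal r"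
  shows "minimal_wrt Kvert (epi g) (y, r) \<longleftrightarrow> g y = ereal r"
proof -
  obtain s where s: "g y = ereal s" "s \<le> r" using assms by (cases "g y") auto
  have "(\<forall>d>0. \<not> s \<le> r - d) \<longleftrightarrow> s = r"
  proof
    assume H: "\<forall>d>0. \<not> s \<le> r - d"
    show "s = r"
    proof (rule ccontr)
      assume "s \<noteq> r"
      with s(2) have "0 < r - s" by simp
      with H have "\<not> s \<le> r - (r - s)" by blast
      then show False by simp
    qed
  qed auto
  then show ?thesis unfolding minimal_wrt_Kvert_iff epi_def using s by simp
qed

lemma minimal_exposed_face_nonvertical:
  fixes g :: "'a::real_inner \<Rightarrow> ereal"
  assumes "exposed_face F (epi g)" and "minimal_face Kvert (epi g) F"
  obtains u b where "F \<noteq> {}" "epi g \<subseteq> {p. (u, -1) \<bullet> p \<le> b}"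
    "F = epi g \<inter> {p. (u, -1) \<bullet> p = b}"
proof -
  obtain a t c where nonempty: "epi g \<inter> {p. (a, t) \<bullet> p = c} \<noteq> {}"
    and supp: "epi g \<subseteq> {p. (a, t) \<bullet> p \<le> c}" and F: "F = epi g \<inter> {p. (a, t) \<bullet> p = c}"
    using assms(1) unfolding exposed_face_def by (metis surj_pair)
  from nonempty F obtain y0 r0 where p0: "(y0, r0) \<in> F" by fastforce
  then have up: "(y0, r0 + 1) \<in> epi g"
    using F unfolding epi_def by (auto intro: order_trans)
  then have "a \<bullet> y0 + t * (r0 + 1) \<le> c" and "a \<bullet> y0 + t * r0 = c"
    using supp p0 F by auto
  then have "t \<le> 0" by (simp add: algebra_simps)
  moreover have "t \<noteq> 0"
  proof
    assume "t = 0"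
    then have "(y0, r0 + 1) \<in> F" using up p0 F by auto
    then have "minimal_wrt Kvert (epi g) (y0, r0 + 1)"
      using assms(2) unfolding minimal_face_def by blast
    then have "(y0, r0 + 1 - 1) \<notin> epi g" unfolding minimal_wrt_Kvert_iff by (metis zero_less_one)
    with p0 F show False by simp
  qed
  ultimately have "t < 0" by simp
  define k where "k = - 1 / t"
  have k: "0 < k" using \<open>t < 0\<close> unfolding k_def by simp
  define u where "u = k *\<^sub>R a"
  have normal: "(u, -1) = k *\<^sub>R (a, t)"
    using \<open>t < 0\<close> unfolding u_def k_def by simp
  have le: "(u, -1) \<bullet> p \<le> k * c \<longleftrightarrow> (a, t) \<bullet> p \<le> c"
    and eq: "(u, -1) \<bullet> p = k * c \<longleftrightarrow> (a, t) \<bullet> p = c" for p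
    using k unfolding normal inner_scaleR_left by (simp_all add: mult_le_cancel_left_pos)
  show thesis
  proof (rule that)
    show "F \<noteq> {}" using p0 by blast
    show "epi g \<subseteq> {p. (u, -1) \<bullet> p \<le> k * c}" using supp le by blast
    show "F = epi g \<inter> {p. (u, -1) \<bullet> p = k * c}" using F eq by blast
  qed
qed

lemma conj_fun_le_iff_epi_halfspace:
  "conj_fun g u \<le> ereal b \<longleftrightarrow> epi g \<subseteq> {p. (u, -1) \<bullet> p \<le> b}"
proof
  assume conj: "conj_fun g u \<le> ereal b"
  show "epi g \<subseteq> {p. (u, -1) \<bullet> p \<le> b}"
  proof (clarify)
    fix x r assume "(x, r) \<in> epi g"
    then have "ereal (x \<bullet> u) - ereal r \<le> ereal (x \<bullet> u) - g x"
      unfolding epi_def by (cases "g x") auto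
    also have "\<dots> \<le> ereal b" using conj_fun_ge[of x u g] conj by (rule order_trans)
    finally show "(u, -1) \<bullet> (x, r) \<le> b" by (simp add: inner_commute)
  qed
next
  assume halfspace: "epi g \<subseteq> {p. (u, -1) \<bullet> p \<le> b}"
  then have le: "x \<bullet> u - r \<le> b" if "g x \<le> ereal r" for x r
    using that unfolding epi_def by (auto simp: inner_commute)
  show "conj_fun g u \<le> ereal b"
  proof (rule conj_fun_le)
    fix x show "ereal (x \<bullet> u) - g x \<le> ereal b"
    proof (cases "g x")
      case (real r)
      then show ?thesis using le[of x r] by simp
    next
      case MInf
      then have "x \<bullet> u - (x \<bullet> u - b - 1) \<le> b" by (intro le) simp
      then show ?thesis by simp
    qed simp
  qed
qed

lemma epi_inter_conj_fun_hyperplane: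
  assumes "conj_fun g u = ereal b"
  shows "epi g \<inter> {p. (u, -1) \<bullet> p = b} = {(x, real_of_ereal (g x)) | x. u \<in> subdiff g x}"
proof (intro set_eqI iffI)
  fix p assume p: "p \<in> epi g \<inter> {p. (u, -1) \<bullet> p = b}"
  obtain x r where xr: "p = (x, r)" by (cases p)
  with p have "g x \<le> ereal r" and plane: "x \<bullet> u - r = b"
    unfolding epi_def by (auto simp: inner_commute)
  moreover have "ereal (x \<bullet> u) - g x \<le> ereal b"
    using conj_fun_ge[of x u g] assms by simp
  ultimately have "g x = ereal r"
    by (cases "g x") auto
  with plane assms have "u \<in> subdiff g x"
    by (simp add: subdiff_iff_conj_fun)
  with \<open>g x = ereal r\<close> show "p \<in> {(x, real_of_ereal (g x)) | x. u \<in> subdiff g x}"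
    unfolding xr by force
next
  fix p assume "p \<in> {(x, real_of_ereal (g x)) | x. u \<in> subdiff g x}"
  then obtain x where p: "p = (x, real_of_ereal (g x))" and "u \<in> subdiff g x" by blast
  then have "\<bar>g x\<bar> \<noteq> \<infinity>" and "ereal b = ereal (x \<bullet> u - real_of_ereal (g x))"
    using assms by (simp_all add: subdiff_iff_conj_fun)
  then show "p \<in> epi g \<inter> {p. (u, -1) \<bullet> p = b}"
    unfolding p epi_def by (cases "g x") (auto simp: inner_commute)
qed

lemma minimal_exposed_face_epi_iff:
  fixes g :: "'a::real_inner \<Rightarrow> ereal"
  shows "exposed_face F (epi g) \<and> minimal_face Kvert (epi g) F \<longleftrightarrow>
    (\<exists>u. (\<exists>x. u \<in> subdiff g x) \<and> F = {(x, real_of_ereal (g x)) | x. u \<in> subdiff g x})"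
    (is "?face \<longleftrightarrow> ?graph")
proof
  assume ?face
  then obtain u b where "F \<noteq> {}" and halfspace: "epi g \<subseteq> {p. (u, -1) \<bullet> p \<le> b}"
    and F: "F = epi g \<inter> {p. (u, -1) \<bullet> p = b}"
    using minimal_exposed_face_nonvertical by blast
  then obtain p where "p \<in> epi g" "(u, -1) \<bullet> p = b"
    by blast
  moreover obtain y r where "p = (y, r)" by (cases p)
  ultimately have "g y \<le> ereal r" "y \<bullet> u - r = b"
    unfolding epi_def by (simp_all add: inner_commute)
  then have "ereal b \<le> ereal (y \<bullet> u) - g y"
    by (cases "g y") auto
  also have "\<dots> \<le> conj_fun g u" by (rule conj_fun_ge)
  finally have "ereal b \<le> conj_fun g u" .
  moreover have "conj_fun g u \<le> ereal b"
    using halfspace by (simp add: conj_fun_le_iff_epi_halfspace)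
  ultimately have "conj_fun g u = ereal b" by (rule antisym[rotated])
  then have "F = {(x, real_of_ereal (g x)) | x. u \<in> subdiff g x}"
    unfolding F by (rule epi_inter_conj_fun_hyperplane)
  with \<open>F \<noteq> {}\<close> show ?graph by blast
next
  assume ?graph
  then obtain u x0 where "u \<in> subdiff g x0" and F: "F = {(x, real_of_ereal (g x)) | x. u \<in> subdiff g x}"
    by blast
  then obtain b where conj: "conj_fun g u = ereal b"
    by (auto simp: subdiff_iff_conj_fun)
  have F_plane: "F = epi g \<inter> {p. (u, -1) \<bullet> p = b}"
    unfolding F epi_inter_conj_fun_hyperplane[OF conj] ..
  have "exposed_face F (epi g)"
    unfolding exposed_face_def
  proof (intro exI conjI)
    show "(u, -1::real) \<noteq> 0" by (simp add: zero_prod_def)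
    show "epi g \<subseteq> {p. (u, -1) \<bullet> p \<le> b}"
      using conj by (simp flip: conj_fun_le_iff_epi_halfspace)
    have "(x0, real_of_ereal (g x0)) \<in> F"
      unfolding F using \<open>u \<in> subdiff g x0\<close> by blast
    then show "epi g \<inter> {p. (u, -1) \<bullet> p = b} \<noteq> {}"
      unfolding F_plane by blast
  qed (fact F_plane)
  moreover have "minimal_face Kvert (epi g) F"
    unfolding minimal_face_def
  proof
    fix p assume "p \<in> F"
    then obtain x where p: "p = (x, real_of_ereal (g x))" and "\<bar>g x\<bar> \<noteq> \<infinity>"
      unfolding F subdiff_def by auto
    then show "minimal_wrt Kvert (epi g) p"
      by (cases "g x") (simp_all add: minimal_wrt_Kvert_epi_iff)
  qed
  ultimately show ?face ..
qed

lemma epi_separator_slope_nonneg: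
  assumes sep: "\<And>y r. g y \<le> ereal r \<Longrightarrow> c < a \<bullet> y + t * r" and "g y0 \<noteq> \<infinity>"
  shows "0 \<le> t"
proof (rule ccontr)
  assume "\<not> 0 \<le> t"
  define r where "r = max (real_of_ereal (g y0)) ((c - a \<bullet> y0) / t)"
  have "g y0 \<le> ereal r"
    using \<open>g y0 \<noteq> \<infinity>\<close> unfolding r_def by (cases "g y0") auto
  then have "c < a \<bullet> y0 + t * r" by (rule sep)
  moreover have "t * r \<le> t * ((c - a \<bullet> y0) / t)"
    using \<open>\<not> 0 \<le> t\<close> unfolding r_def by (intro mult_left_mono_neg) auto
  ultimately show False
    using \<open>\<not> 0 \<le> t\<close> by simp
qed

lemma conj_fun_le_of_epi_separator:
  assumes sep: "\<And>y r. g y \<le> ereal r \<Longrightarrow> c < a \<bullet> y + t * r" and "0 < t"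
  shows "conj_fun g ((- 1 / t) *\<^sub>R a) \<le> ereal (- c / t)"
  unfolding conj_fun_le_iff_epi_halfspace
proof (clarify)
  fix y r assume "(y, r) \<in> epi g"
  then have "c < a \<bullet> y + t * r" unfolding epi_def by (auto intro: sep)
  have "((- 1 / t) *\<^sub>R a, -1) \<bullet> (y, r) = - (a \<bullet> y + t * r) / t"
    using \<open>0 < t\<close> by (simp add: field_simps)
  also have "\<dots> \<le> - c / t"
    using \<open>c < a \<bullet> y + t * r\<close> \<open>0 < t\<close> by (intro divide_right_mono) auto
  finally show "((- 1 / t) *\<^sub>R a, -1) \<bullet> (y, r) \<le> - c / t" .
qed

lemma conj_fun_tilt_le:
  assumes "\<And>y. g y \<noteq> \<infinity> \<Longrightarrow> c \<le> a \<bullet> y" and "0 \<le> L"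
  shows "conj_fun g (u - L *\<^sub>R a) \<le> conj_fun g u - ereal (L * c)"
proof (rule conj_fun_le)
  fix y
  have "ereal (y \<bullet> (u - L *\<^sub>R a)) - g y \<le> (ereal (y \<bullet> u) - g y) - ereal (L * c)"
  proof (cases "g y")
    case (real s)
    then have "L * c \<le> L * (a \<bullet> y)" using assms by (simp add: mult_left_mono)
    with real show ?thesis by (simp add: inner_diff_right inner_commute)
  qed simp_all
  also have "\<dots> \<le> conj_fun g u - ereal (L * c)"
    by (intro ereal_minus_mono conj_fun_ge order_refl)
  finally show "ereal (y \<bullet> (u - L *\<^sub>R a)) - g y \<le> conj_fun g u - ereal (L * c)" .
qed

lemma conj_conj_fun_gt_of_epi_separator:
  assumes sep: "\<And>y r. g y \<le> ereal r \<Longrightarrow> c < a \<bullet> y + t * r"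
    and "0 < t" and "a \<bullet> x + t * B < c"
  shows "ereal B < conj_fun (conj_fun g) x"
proof -
  define u where "u = (- 1 / t) *\<^sub>R a"
  have "B < (c - a \<bullet> x) / t"
    using assms(2,3) by (simp add: less_divide_eq algebra_simps)
  then have "ereal B < ereal (x \<bullet> u) - ereal (- c / t)"
    unfolding u_def by (simp add: inner_commute diff_divide_distrib)
  also have "\<dots> \<le> ereal (x \<bullet> u) - conj_fun g u"
    unfolding u_def by (intro ereal_minus_mono order_refl conj_fun_le_of_epi_separator[OF sep \<open>0 < t\<close>])
  also have "\<dots> \<le> conj_fun (conj_fun g) x"
    using conj_fun_ge[of u x "conj_fun g"] by (simp add: inner_commute)
  finally show ?thesis .
qed

lemma conj_conj_fun_eq_infinity_of_separated:
  assumes "\<And>y. g y \<noteq> \<infinity> \<Longrightarrow> c \<le> a \<bullet> y" and "a \<bullet> x < c" and "conj_fun g u0 = ereal F0"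
  shows "conj_fun (conj_fun g) x = \<infinity>"
proof (rule ereal_top)
  fix B
  define L where "L = max 0 ((B - x \<bullet> u0 + F0) / (c - a \<bullet> x))"
  define v where "v = u0 - L *\<^sub>R a"
  have "B - x \<bullet> u0 + F0 \<le> L * (c - a \<bullet> x)"
  proof -
    have "0 < c - a \<bullet> x" using assms(2) by simp
    moreover have "(B - x \<bullet> u0 + F0) / (c - a \<bullet> x) \<le> L" unfolding L_def by simp
    ultimately show ?thesis by (simp add: pos_divide_le_eq)
  qed
  then have "ereal B \<le> ereal (x \<bullet> v) - ereal (F0 - L * c)"
    unfolding v_def by (simp add: inner_diff_right inner_commute algebra_simps)
  also have "\<dots> \<le> ereal (x \<bullet> v) - conj_fun g v"
    using conj_fun_tilt_le[of g c a L u0] assms(1,3)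
    unfolding v_def L_def by (intro ereal_minus_mono order_refl) simp_all
  also have "\<dots> \<le> conj_fun (conj_fun g) x"
    using conj_fun_ge[of v x "conj_fun g"] by (simp add: inner_commute)
  finally show "ereal B \<le> conj_fun (conj_fun g) x" .
qed

lemma fenchel_moreau_le:
  fixes f :: "'a::euclidean_space \<Rightarrow> ereal"
  assumes "proper_fun f" "closed_fun f" "convex_fun f" and "conj_fun f u0 \<noteq> \<infinity>"
  shows "f x \<le> conj_fun (conj_fun f) x"
proof (rule ccontr)
  assume "\<not> f x \<le> conj_fun (conj_fun f) x"
  then have "conj_fun (conj_fun f) x < f x" by simp
  then obtain B where B: "conj_fun (conj_fun f) x < ereal B" "ereal B < f x"
    by (metis ereal_dense2)
  then have "(x, B) \<notin> epi f" unfolding epi_def by simp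
  then have "\<exists>w c. w \<bullet> (x, B) < c \<and> (\<forall>p \<in> epi f. c < w \<bullet> p)"
    using assms(2,3) unfolding closed_fun_def convex_fun_def
    by (intro separating_hyperplane_closed_point)
  then obtain a t c where sep_pair: "(a, t) \<bullet> (x, B) < c" and sep_epi: "\<forall>p \<in> epi f. c < (a, t) \<bullet> p"
    by (metis surj_pair)
  have sep: "c < a \<bullet> y + t * r" if "f y \<le> ereal r" for y r
    using sep_epi that unfolding epi_def by auto
  from sep_pair have sep_x: "a \<bullet> x + t * B < c" by simp
  obtain y0 where "f y0 \<noteq> \<infinity>" using assms(1) unfolding proper_fun_def by auto
  with sep have "0 \<le> t" by (rule epi_separator_slope_nonneg)
  then consider "0 < t" | "t = 0" by linarith
  then show False
  proof cases
    case 1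
    have "ereal B < conj_fun (conj_fun f) x"
      by (rule conj_conj_fun_gt_of_epi_separator[OF sep 1 sep_x])
    with B(1) show False by simp
  next
    case 2
    obtain F0 where "conj_fun f u0 = ereal F0"
      using assms(4) conj_fun_neq_minf[OF assms(1)] by (cases "conj_fun f u0") auto
    moreover have "c \<le> a \<bullet> y" if "f y \<noteq> \<infinity>" for y
      using sep[of y "real_of_ereal (f y)"] that 2 by (cases "f y") auto
    ultimately have "conj_fun (conj_fun f) x = \<infinity>"
      using sep_x 2 by (intro conj_conj_fun_eq_infinity_of_separated) auto
    with B(1) show False by simp
  qed
qed

lemma subdiff_conj_fun_iff:
  fixes f :: "'a::euclidean_space \<Rightarrow> ereal"
  assumes "proper_fun f" "closed_fun f" "convex_fun f"
  shows "x \<in> subdiff (conj_fun f) u \<longleftrightarrow> u \<in> subdiff f x"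
proof
  assume x: "x \<in> subdiff (conj_fun f) u"
  then obtain b where b: "conj_fun f u = ereal b"
    unfolding subdiff_def by (cases "conj_fun f u") auto
  have "f x \<le> conj_fun (conj_fun f) x"
    using b by (intro fenchel_moreau_le[OF assms, of u]) simp
  also have "\<dots> \<le> ereal (x \<bullet> u - b)"
  proof (rule conj_fun_le)
    fix v
    have "conj_fun f u + ereal ((v - u) \<bullet> x) \<le> conj_fun f v"
      using x unfolding subdiff_def by blast
    then show "ereal (v \<bullet> x) - conj_fun f v \<le> ereal (x \<bullet> u - b)"
      using b conj_fun_neq_minf[OF assms(1), of v]
      by (cases "conj_fun f v") (auto simp: inner_diff_left inner_diff_right inner_commute)
  qed
  finally have "f x \<le> ereal (x \<bullet> u - b)" .
  moreover have "ereal (x \<bullet> u) - f x \<le> ereal b"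
    using conj_fun_ge[of x u f] b by simp
  ultimately have "f x = ereal (x \<bullet> u - b)"
    by (cases "f x") auto
  with b show "u \<in> subdiff f x"
    by (simp add: subdiff_iff_conj_fun)
next
  assume "u \<in> subdiff f x"
  then obtain r where r: "f x = ereal r" and conj: "conj_fun f u = ereal (x \<bullet> u - r)"
    by (cases "f x") (auto simp: subdiff_iff_conj_fun)
  have "conj_fun f u + ereal ((v - u) \<bullet> x) \<le> conj_fun f v" for v
    using conj_fun_ge[of x v f] r conj by (simp add: inner_diff_right inner_commute)
  with conj show "x \<in> subdiff (conj_fun f) u"
    unfolding subdiff_def by simp
qed

lemma subdiff_imp_edom: "u \<in> subdiff g x \<Longrightarrow> x \<in> edom g"
  unfolding subdiff_def edom_def by auto

theorem proposition3p2:
  fixes f :: "'a::euclidean_space \<Rightarrow> ereal"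
  assumes "proper_fun f" and "closed_fun f" and "convex_fun f"
  shows "(\<forall>F. F \<subseteq> epi f \<longrightarrow>
            ((exposed_face F (epi f) \<and> minimal_face Kvert (epi f) F) \<longleftrightarrow>
             (\<exists>ub \<in> edom (conj_fun f). subdiff (conj_fun f) ub \<noteq> {} \<and>
                F = {(x, real_of_ereal (f x)) | x. ub \<in> subdiff f x})))
       \<and> (\<forall>G. G \<subseteq> epi (conj_fun f) \<longrightarrow>
            ((exposed_face G (epi (conj_fun f)) \<and> minimal_face Kvert (epi (conj_fun f)) G) \<longleftrightarrow>
             (\<exists>xb \<in> edom f. subdiff f xb \<noteq> {} \<and>
                G = {(u, real_of_ereal (conj_fun f u)) | u. u \<in> subdiff f xb})))"
proof -
  note subdiff_conj = subdiff_conj_fun_iff[OF assms]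
  have slope_in_range: "(\<exists>x. u \<in> subdiff f x) \<longleftrightarrow> u \<in> edom (conj_fun f) \<and> subdiff (conj_fun f) u \<noteq> {}"
    for u using subdiff_conj subdiff_imp_edom by blast
  have point_in_dom: "(\<exists>u. u \<in> subdiff f x) \<longleftrightarrow> x \<in> edom f \<and> subdiff f x \<noteq> {}"
    for x using subdiff_imp_edom by blast
  have "exposed_face F (epi f) \<and> minimal_face Kvert (epi f) F \<longleftrightarrow>
      (\<exists>ub \<in> edom (conj_fun f). subdiff (conj_fun f) ub \<noteq> {} \<and>
         F = {(x, real_of_ereal (f x)) | x. ub \<in> subdiff f x})" for F
    unfolding minimal_exposed_face_epi_iff slope_in_range by (simp only: Bex_def conj_assoc)
  moreover have "exposed_face G (epi (conj_fun f)) \<and> minimal_face Kvert (epi (conj_fun f)) G \<longleftrightarrow>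
      (\<exists>xb \<in> edom f. subdiff f xb \<noteq> {} \<and>
         G = {(u, real_of_ereal (conj_fun f u)) | u. u \<in> subdiff f xb})" for G
    unfolding minimal_exposed_face_epi_iff subdiff_conj point_in_dom by (simp only: Bex_def conj_assoc)
  ultimately show ?thesis by blast
qed

end
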